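(* Let $P$ and $Q$ be rational Herglotz functions vanishing at infinity, i.e. $P(z)=\sum_{j\in J_1}A_j(p_j-z)^{-1}$ and $Q(z)=\sum_{\ell\in J_2}B_\ell(q_\ell-z)^{-1}$ with finite index sets $J_1,J_2$, $A_j\ge 0$, $B_\ell\ge 0$, $p_j,q_\ell\in\mathbb{R}$. Let $\Gamma$ be a closed, clockwise oriented Jordan contour in $\mathbb{C}$ containing no pole of $P$ or $Q$, such that every pole of $P$ or $Q$ lying in the interior of $\Gamma$ is strictly smaller than every pole of $P$ or $Q$ lying in the exterior of $\Gamma$ (i.e. $\Gamma$ encircles some of the poles "starting from the left"). Then $$\frac{1}{2\pi i}\oint_\Gamma dz\,P(z)Q(z)\ge 0.$$
   Context: A Herglotz function is an analytic function $f:\mathbb{C}_+\to\mathbb{C}$ with $f(\mathbb{C}_+)\subseteq\mathbb{C}_+$, where $\mathbb{C}_+$ is the open upper half-plane. *)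

theory Defs
  imports "HOL-Complex_Analysis.Complex_Analysis"
begin

definition rat_herglotz :: "'i set \<Rightarrow> ('i \<Rightarrow> real) \<Rightarrow> ('i \<Rightarrow> real) \<Rightarrow> complex \<Rightarrow> complex" where
  "rat_herglotz J A p z = (\<Sum>j\<in>J. complex_of_real (A j) / (complex_of_real (p j) - z))"

definition rat_herglotz_poles :: "'i set \<Rightarrow> ('i \<Rightarrow> real) \<Rightarrow> ('i \<Rightarrow> real) \<Rightarrow> real set" where
  "rat_herglotz_poles J A p = {p j | j. j \<in> J \<and> A j > 0}"

end

theory Submission
  imports Defs
begin

text \<open>Expanding \<open>P Q\<close> into the partial fractions \<open>A\<^sub>j B\<^sub>l / ((p\<^sub>j - z)(q\<^sub>l - z))\<close>,
  the winding number formula for Cauchy integrals turns the integral of each term into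
  \<open>A\<^sub>j B\<^sub>l\<close> times a divided difference \<open>(\<chi>(p\<^sub>j) - \<chi>(q\<^sub>l)) / (q\<^sub>l - p\<^sub>j)\<close> of the indicator
  \<open>\<chi>\<close> of the interior of \<open>\<Gamma>\<close> (the winding number being \<open>-\<chi>\<close>). Since the enclosed poles all
  lie to the left of the others, \<open>\<chi>\<close> is non-increasing on the set of poles, so every divided
  difference is non-negative.\<close>

lemma winding_number_eq_neg_indicator_inside:
  assumes "path g" "pathfinish g = pathstart g"
    and "\<forall>w\<in>inside (path_image g). winding_number g w = -1"
    and "z \<notin> path_image g"
  shows "winding_number g z = - indicator (inside (path_image g)) z"
proof (cases "z \<in> inside (path_image g)")
  case False
  with assms(4) have "z \<in> outside (path_image g)"
    using inside_Un_outside[of "path_image g"] by blast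
  with False show ?thesis
    using assms(1,2) by (simp add: winding_number_zero_in_outside)
qed (use assms(3) in simp)

text \<open>For \<open>a = b\<close> the right-hand side is \<open>0\<close> because division by zero yields zero in HOL,
  which is correct since \<open>1 / (a - z)\<^sup>2\<close> has the primitive \<open>1 / (a - z)\<close>.\<close>

lemma has_contour_integral_reciprocal_product:
  assumes g: "valid_path g" "pathfinish g = pathstart g"
    and ab: "a \<notin> path_image g" "b \<notin> path_image g"
  shows "((\<lambda>z. 1 / ((a - z) * (b - z))) has_contour_integral
          2 * of_real pi * \<i> * ((winding_number g b - winding_number g a) / (b - a))) g"
proof (cases "a = b")
  case True
  have "((\<lambda>z. 1 / (a - z)) has_field_derivative 1 / ((a - z) * (b - z))) (at z within - {a})"
    if "z \<in> - {a}" for z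
    using that True by (auto intro!: derivative_eq_intros simp: field_simps power2_eq_square)
  from contour_integral_primitive[OF this g(1)] ab g(2) True show ?thesis
    by auto
next
  case False
  have "((\<lambda>z. (1 / (z - b) - 1 / (z - a)) / (b - a)) has_contour_integral
          (2 * pi * \<i> * winding_number g b - 2 * pi * \<i> * winding_number g a) / (b - a)) g"
    by (intro has_contour_integral_div has_contour_integral_diff
              has_contour_integral_winding_number g(1) ab)
  then have "((\<lambda>z. (1 / (z - b) - 1 / (z - a)) / (b - a)) has_contour_integral
          2 * of_real pi * \<i> * ((winding_number g b - winding_number g a) / (b - a))) g"
    by (simp add: algebra_simps)
  then show ?thesis
  proof (rule has_contour_integral_eq)
    fix z assume "z \<in> path_image g"
    with ab False have "z - a \<noteq> 0" "z - b \<noteq> 0" "a - z \<noteq> 0" "b - z \<noteq> 0" "b - a \<noteq> 0"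
      by auto
    then show "(1 / (z - b) - 1 / (z - a)) / (b - a) = 1 / ((a - z) * (b - z))"
      by (simp add: divide_simps) (simp add: algebra_simps)
  qed
qed

lemma winding_number_divided_difference_of_real:
  assumes "path g" "pathfinish g = pathstart g"
    and "\<forall>w\<in>inside (path_image g). winding_number g w = -1"
    and "complex_of_real a \<notin> path_image g" "complex_of_real b \<notin> path_image g"
  shows "(winding_number g (of_real b) - winding_number g (of_real a)) / (of_real b - of_real a) =
         of_real ((indicator (of_real -` inside (path_image g)) a
                   - indicator (of_real -` inside (path_image g)) b) / (b - a))"
  using winding_number_eq_neg_indicator_inside[OF assms(1-3)] assms(4,5)
  by (simp add: indicator_vimage indicator_def)

lemma divided_difference_indicator_nonneg:
  fixes S X :: "real set"
  assumes "\<forall>x\<in>X. \<forall>y\<in>X. x \<in> S \<longrightarrow> y \<notin> S \<longrightarrow> x < y" and "a \<in> X" "b \<in> X"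
  shows "0 \<le> (indicator S a - indicator S b) / (b - a)"
  using assms by (cases "a \<in> S"; cases "b \<in> S") (force simp: divide_nonneg_neg)+

lemma rat_herglotz_nonzero_weights:
  assumes "finite J"
  shows "rat_herglotz J A p = rat_herglotz {j\<in>J. A j \<noteq> 0} A p"
  unfolding rat_herglotz_def fun_eq_iff using assms by (auto intro!: sum.mono_neutral_right)

lemma has_contour_integral_rat_herglotz_mult:
  assumes "finite J1" "finite J2" "valid_path g" "pathfinish g = pathstart g"
    and "\<forall>j\<in>J1. complex_of_real (p j) \<notin> path_image g"
    and "\<forall>l\<in>J2. complex_of_real (q l) \<notin> path_image g"
  shows "((\<lambda>z. rat_herglotz J1 A p z * rat_herglotz J2 B q z) has_contour_integral
          2 * of_real pi * \<i> * (\<Sum>j\<in>J1. \<Sum>l\<in>J2. of_real (A j * B l) *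
            ((winding_number g (of_real (q l)) - winding_number g (of_real (p j)))
             / (of_real (q l) - of_real (p j))))) g"
proof -
  have "((\<lambda>z. \<Sum>j\<in>J1. \<Sum>l\<in>J2. of_real (A j * B l) *
            (1 / ((of_real (p j) - z) * (of_real (q l) - z)))) has_contour_integral
          (\<Sum>j\<in>J1. \<Sum>l\<in>J2. of_real (A j * B l) * (2 * of_real pi * \<i> *
            ((winding_number g (of_real (q l)) - winding_number g (of_real (p j)))
             / (of_real (q l) - of_real (p j)))))) g"
    using assms by (intro has_contour_integral_sum has_contour_integral_lmul
                          has_contour_integral_reciprocal_product) auto
  moreover have "(\<lambda>z. \<Sum>j\<in>J1. \<Sum>l\<in>J2. of_real (A j * B l) *
            (1 / ((of_real (p j) - z) * (of_real (q l) - z)))) =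
        (\<lambda>z. rat_herglotz J1 A p z * rat_herglotz J2 B q z)"
    by (simp add: rat_herglotz_def sum_product)
  ultimately show ?thesis
    by (simp add: sum_distrib_left mult_ac)
qed

theorem lemma2p1:
  fixes J1 :: "'i set" and J2 :: "'k set"
    and A p :: "'i \<Rightarrow> real" and B q :: "'k \<Rightarrow> real"
    and g :: "real \<Rightarrow> complex"
  assumes "finite J1" and "finite J2"
    and "\<forall>j\<in>J1. A j \<ge> 0" and "\<forall>l\<in>J2. B l \<ge> 0"
    and "valid_path g" and "simple_path g" and "pathfinish g = pathstart g"
    and "\<forall>z\<in>inside (path_image g). winding_number g z = -1"
    and "\<forall>x\<in>rat_herglotz_poles J1 A p \<union> rat_herglotz_poles J2 B q.
           complex_of_real x \<notin> path_image g"
    and "\<forall>x\<in>rat_herglotz_poles J1 A p \<union> rat_herglotz_poles J2 B q.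
         \<forall>y\<in>rat_herglotz_poles J1 A p \<union> rat_herglotz_poles J2 B q.
           complex_of_real x \<in> inside (path_image g) \<longrightarrow>
           complex_of_real y \<in> outside (path_image g) \<longrightarrow> x < y"
  shows "\<exists>r\<ge>0. contour_integral g (\<lambda>z. rat_herglotz J1 A p z * rat_herglotz J2 B q z)
                 / (2 * of_real pi * \<i>) = complex_of_real r"
proof -
  let ?X = "rat_herglotz_poles J1 A p \<union> rat_herglotz_poles J2 B q"
  let ?S = "complex_of_real -` inside (path_image g)"
  define J1' where "J1' = {j\<in>J1. A j \<noteq> 0}"
  define J2' where "J2' = {l\<in>J2. B l \<noteq> 0}"
  have poles: "j \<in> J1' \<Longrightarrow> p j \<in> ?X" "l \<in> J2' \<Longrightarrow> q l \<in> ?X" for j l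
    using assms(3,4) by (force simp: J1'_def J2'_def rat_herglotz_poles_def)+
  have left_of: "\<forall>x\<in>?X. \<forall>y\<in>?X. x \<in> ?S \<longrightarrow> y \<notin> ?S \<longrightarrow> x < y"
    using assms(9,10) inside_Un_outside[of "path_image g"] by blast
  define d where "d j l = (indicator ?S (p j) - indicator ?S (q l)) / (q l - p j)" for j l
  have off_path: "\<forall>j\<in>J1'. of_real (p j) \<notin> path_image g" "\<forall>l\<in>J2'. of_real (q l) \<notin> path_image g"
    using poles assms(9) by blast+
  have "(winding_number g (of_real (q l)) - winding_number g (of_real (p j)))
          / (of_real (q l) - of_real (p j)) = of_real (d j l)" if "j \<in> J1'" "l \<in> J2'" for j l
    unfolding d_def using that off_path
    by (intro winding_number_divided_difference_of_real valid_path_imp_path assms(5,7,8)) auto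
  then have "((\<lambda>z. rat_herglotz J1' A p z * rat_herglotz J2' B q z) has_contour_integral
          2 * of_real pi * \<i> * of_real (\<Sum>j\<in>J1'. \<Sum>l\<in>J2'. A j * B l * d j l)) g"
    using has_contour_integral_rat_herglotz_mult[of J1' J2' g p q A B] assms(1,2,5,7) off_path
    by (simp add: J1'_def J2'_def)
  moreover have "rat_herglotz J1' A p = rat_herglotz J1 A p" "rat_herglotz J2' B q = rat_herglotz J2 B q"
    using assms(1,2) by (simp_all add: J1'_def J2'_def rat_herglotz_nonzero_weights[symmetric])
  ultimately have integral: "contour_integral g (\<lambda>z. rat_herglotz J1 A p z * rat_herglotz J2 B q z)
               / (2 * of_real pi * \<i>) = of_real (\<Sum>j\<in>J1'. \<Sum>l\<in>J2'. A j * B l * d j l)"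
    by (simp add: contour_integral_unique)
  have "0 \<le> d j l" if "j \<in> J1'" "l \<in> J2'" for j l
    unfolding d_def using poles that by (intro divided_difference_indicator_nonneg[OF left_of])
  then have "0 \<le> (\<Sum>j\<in>J1'. \<Sum>l\<in>J2'. A j * B l * d j l)"
    using assms(3,4) by (auto simp: J1'_def J2'_def intro!: sum_nonneg)
  with integral show ?thesis by blast
qed

end
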